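(* Let $K, T \geq 1$ be integers, let $r_{tk}$ ($t = 1,\ldots,T$, $k = 1,\ldots,K$) be real numbers (the return of security $k$ at time $t$), and let $H_1,\ldots,H_K > 0$ be thresholds. For each security $k$ and time $t$, classify the observation $r_{tk}$ as $U$ (up) if $r_{tk} \geq H_k$, as $D$ (down) if $r_{tk} \leq -H_k$, and as $N$ (neutral) if $-H_k < r_{tk} < H_k$. For $p,q \in \{U,N,D\}$ and securities $i,j$, let $n_{ij}^{pq}$ be the number of times $t \in \{1,\ldots,T\}$ at which $r_{ti}$ is in category $p$ and $r_{tj}$ is in category $q$. Assume that for every $i,j$ the quantities $$n_{ij}^{(A)} = n_{ij}^{UU} + n_{ij}^{UN} + n_{ij}^{UD} + n_{ij}^{DU} + n_{ij}^{DN} + n_{ij}^{DD}, \qquad n_{ij}^{(B)} = n_{ij}^{UU} + n_{ij}^{NU} + n_{ij}^{DU} + n_{ij}^{UD} + n_{ij}^{ND} + n_{ij}^{DD}$$ are positive (equivalently, every security is in category $U$ or $D$ at least once). Define the $K\times K$ matrix $G^{(1)}$ with entries $$g_{ij}^{(1)} = \frac{n_{ij}^{UU} + n_{ij}^{DD} - n_{ij}^{UD} - n_{ij}^{DU}}{\sqrt{n_{ij}^{(A)}\, n_{ij}^{(B)}}}.$$ Then $G^{(1)}$ is positive semidefinite.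
   Context: In the paper the thresholds are $H_k = c\,\sigma_k$, where $c>0$ is a fixed fraction (e.g. $1/2$) and $\sigma_k$ is the sample standard deviation of the returns of security $k$; the result only uses that the thresholds are positive. The matrix $G^{(1)}$ is called Gerber Statistic 1. *)

theory Defs
  imports "HOL-Analysis.Analysis"
begin

datatype cat = U | N | D

definition classify :: "real \<Rightarrow> real \<Rightarrow> cat" where
  "classify h x = (if x \<ge> h then U else if x \<le> - h then D else N)"

definition ncount :: "nat \<Rightarrow> (nat \<Rightarrow> nat \<Rightarrow> real) \<Rightarrow> (nat \<Rightarrow> real)
    \<Rightarrow> nat \<Rightarrow> nat \<Rightarrow> cat \<Rightarrow> cat \<Rightarrow> nat" where
  "ncount T r H i j p q =
     card {t \<in> {1..T}. classify (H i) (r t i) = p \<and> classify (H j) (r t j) = q}"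

definition nA :: "nat \<Rightarrow> (nat \<Rightarrow> nat \<Rightarrow> real) \<Rightarrow> (nat \<Rightarrow> real) \<Rightarrow> nat \<Rightarrow> nat \<Rightarrow> nat" where
  "nA T r H i j = ncount T r H i j U U + ncount T r H i j U N + ncount T r H i j U D
                + ncount T r H i j D U + ncount T r H i j D N + ncount T r H i j D D"

definition nB :: "nat \<Rightarrow> (nat \<Rightarrow> nat \<Rightarrow> real) \<Rightarrow> (nat \<Rightarrow> real) \<Rightarrow> nat \<Rightarrow> nat \<Rightarrow> nat" where
  "nB T r H i j = ncount T r H i j U U + ncount T r H i j N U + ncount T r H i j D U
                + ncount T r H i j U D + ncount T r H i j N D + ncount T r H i j D D"

definition gerber1 :: "nat \<Rightarrow> (nat \<Rightarrow> nat \<Rightarrow> real) \<Rightarrow> (nat \<Rightarrow> real) \<Rightarrow> nat \<Rightarrow> nat \<Rightarrow> real" where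
  "gerber1 T r H i j =
     (real (ncount T r H i j U U) + real (ncount T r H i j D D)
      - real (ncount T r H i j U D) - real (ncount T r H i j D U))
     / sqrt (real (nA T r H i j) * real (nB T r H i j))"

definition psd :: "nat \<Rightarrow> (nat \<Rightarrow> nat \<Rightarrow> real) \<Rightarrow> bool" where
  "psd K G \<longleftrightarrow> (\<forall>i\<in>{1..K}. \<forall>j\<in>{1..K}. G i j = G j i) \<and>
     (\<forall>x :: nat \<Rightarrow> real. (\<Sum>i=1..K. \<Sum>j=1..K. x i * G i j * x j) \<ge> 0)"

end

theory Submission
  imports Defs
begin

text \<open>Encode the categories as signs U = 1, N = 0, D = -1 and let s k be the sign vector of
  security k over time. Then every count entering g_ij^(1) is an inner product of sign vectors:
  the numerator is s i \<bullet> s j, and n_ij^(A), n_ij^(B) are |s i|^2, |s j|^2, since the squared sign is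
  the indicator of U or D. Hence G^(1) is the matrix of cosines between the vectors s k, i.e. the
  Gram matrix of the normalised vectors s k / |s k|, and Gram matrices are positive semidefinite.\<close>

definition cat_sign :: "cat \<Rightarrow> real" where
  "cat_sign c = (case c of U \<Rightarrow> 1 | N \<Rightarrow> 0 | D \<Rightarrow> -1)"

lemma psd_gram:
  fixes u :: "'t \<Rightarrow> nat \<Rightarrow> real"
  shows "psd K (\<lambda>i j. \<Sum>t\<in>S. u t i * u t j)"
proof -
  have "(\<Sum>i=1..K. \<Sum>j=1..K. x i * (\<Sum>t\<in>S. u t i * u t j) * x j)
      = (\<Sum>t\<in>S. (\<Sum>i=1..K. x i * u t i)\<^sup>2)" for x
    by (simp add: power2_eq_square sum_distrib_left sum_distrib_right sum_product
        sum.swap[of _ S] algebra_simps)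
  then show ?thesis
    unfolding psd_def by (simp add: mult.commute sum_nonneg)
qed

text \<open>No hypothesis on the vectors is needed: as x / 0 = 0, a zero vector s k gives a zero row
  and column, exactly as its normalisation s k / 0 = 0 does.\<close>
lemma psd_cosine_matrix:
  fixes s :: "'t \<Rightarrow> nat \<Rightarrow> real"
  shows "psd K (\<lambda>i j. (\<Sum>t\<in>S. s t i * s t j)
                      / sqrt ((\<Sum>t\<in>S. (s t i)\<^sup>2) * (\<Sum>t\<in>S. (s t j)\<^sup>2)))"
proof -
  define u where "u t k = s t k / sqrt (\<Sum>t\<in>S. (s t k)\<^sup>2)" for t k
  have "(\<Sum>t\<in>S. s t i * s t j) / sqrt ((\<Sum>t\<in>S. (s t i)\<^sup>2) * (\<Sum>t\<in>S. (s t j)\<^sup>2))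
      = (\<Sum>t\<in>S. u t i * u t j)" for i j
    by (simp add: u_def real_sqrt_mult sum_divide_distrib)
  then show ?thesis
    using psd_gram[of K u S] by simp
qed

lemma ncount_eq_sum:
  "real (ncount T r H i j p q)
     = (\<Sum>t=1..T. of_bool (classify (H i) (r t i) = p \<and> classify (H j) (r t j) = q))"
  by (simp add: ncount_def Int_def)

lemma gerber1_numerator_eq_inner:
  "real (ncount T r H i j U U) + real (ncount T r H i j D D)
      - real (ncount T r H i j U D) - real (ncount T r H i j D U)
   = (\<Sum>t=1..T. cat_sign (classify (H i) (r t i)) * cat_sign (classify (H j) (r t j)))"
proof -
  have "of_bool (p = U \<and> q = U) + of_bool (p = D \<and> q = D)
          - of_bool (p = U \<and> q = D) - of_bool (p = D \<and> q = U) = cat_sign p * cat_sign q"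
    for p q by (cases p; cases q) (simp_all add: cat_sign_def)
  then show ?thesis
    unfolding ncount_eq_sum sum.distrib[symmetric] sum_subtractf[symmetric] by simp
qed

lemma nA_eq_norm_sq:
  "real (nA T r H i j) = (\<Sum>t=1..T. (cat_sign (classify (H i) (r t i)))\<^sup>2)"
proof -
  have "of_bool (p = U \<and> q = U) + of_bool (p = U \<and> q = N) + of_bool (p = U \<and> q = D)
          + of_bool (p = D \<and> q = U) + of_bool (p = D \<and> q = N) + of_bool (p = D \<and> q = D)
        = (cat_sign p)\<^sup>2"
    for p q by (cases p; cases q) (simp_all add: cat_sign_def)
  then show ?thesis
    unfolding nA_def of_nat_add ncount_eq_sum sum.distrib[symmetric] by simp
qed

lemma nB_eq_norm_sq:
  "real (nB T r H i j) = (\<Sum>t=1..T. (cat_sign (classify (H j) (r t j)))\<^sup>2)"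
proof -
  have "of_bool (p = U \<and> q = U) + of_bool (p = N \<and> q = U) + of_bool (p = D \<and> q = U)
          + of_bool (p = U \<and> q = D) + of_bool (p = N \<and> q = D) + of_bool (p = D \<and> q = D)
        = (cat_sign q)\<^sup>2"
    for p q by (cases p; cases q) (simp_all add: cat_sign_def)
  then show ?thesis
    unfolding nB_def of_nat_add ncount_eq_sum sum.distrib[symmetric] by simp
qed

lemma gerber1_eq_cosine_matrix:
  fixes r :: "nat \<Rightarrow> nat \<Rightarrow> real" and H :: "nat \<Rightarrow> real"
  defines "s t k \<equiv> cat_sign (classify (H k) (r t k))"
  shows "gerber1 T r H
           = (\<lambda>i j. (\<Sum>t\<in>{1..T}. s t i * s t j)
                     / sqrt ((\<Sum>t\<in>{1..T}. (s t i)\<^sup>2) * (\<Sum>t\<in>{1..T}. (s t j)\<^sup>2)))"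
  unfolding gerber1_def gerber1_numerator_eq_inner nA_eq_norm_sq nB_eq_norm_sq s_def ..

theorem proposition1:
  fixes K T :: nat and r :: "nat \<Rightarrow> nat \<Rightarrow> real" and H :: "nat \<Rightarrow> real"
  assumes "K \<ge> 1" and "T \<ge> 1"
    and "\<forall>k\<in>{1..K}. H k > 0"
    and "\<forall>i\<in>{1..K}. \<forall>j\<in>{1..K}. nA T r H i j > 0 \<and> nB T r H i j > 0"
  shows "psd K (gerber1 T r H)"
  unfolding gerber1_eq_cosine_matrix by (rule psd_cosine_matrix)

end
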